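(* In REFORM with the RPTSC reward scheme with at most $k=2$ pairings, in the setting described in the context, suppose all agents other than $a_i$ play the trustworthy strategy, and suppose Assumption $\mathsf{A}_1$ holds for $a_i$ reporting at time $t_i$: $$\overline{Ref}_i(\alpha)-\alpha\beta(t_i)\ \ge\ c(e_H)-c(e_L).$$ Then $a_i$'s ex-ante expected utility from exerting high effort exceeds that from reporting randomly at the same time: $$\overline{Ref}_i(\alpha)-c(e_H)\ >\ \overline{E}_{ra}-c(e_L),\qquad\text{where } \overline{E}_{ra}=\sum_{y\in\mathcal{X}}p_y\,\alpha r\beta(t_i)(1-p_y)\left(1-(1-p_y)^{n-1}\right).$$
   Context: Setting. In each round there are $n\ge 2$ statistically independent, a-priori similar tasks with common finite answer space $\mathcal{X}$. An agent exerts high effort $e_H$ (cost $c(e_H)$), obtaining an evaluation $x_i\in\mathcal{X}$, or low effort $e_L$ (cost $c(e_L)<c(e_H)$), obtaining no evaluation and reporting randomly according to its prior. Trustworthy strategy: high effort, report the true evaluation. A decay factor $\beta(t)>0$, decreasing in $t$, multiplies rewards. REFORM with RPTSC reward uses a scale $\alpha>0$; utility is reward minus effort cost. Beliefs. $p_x=P_p(x)\in(0,1)$ is the prior probability that a peer's evaluation is $x$, and $p'_x=P_{p|i}(x\mid x_i=x)\in(0,1)$ is the posterior probability that a peer's evaluation is $x$ given that $a_i$'s evaluation is $x$. $r\in[0,1]$ is $a_i$'s belief that a random peer's TERM score is below its own. Ex-ante expected reward of a trustworthy agent (before evaluation, all others trustworthy): $$\overline{Ref}_i(\alpha)=\alpha\beta(t_i)\sum_{x\in\mathcal{X}}p_x\left[\left(\frac{p'_x}{p_x}-1+r\,p'_x\frac{1-p'_x}{p_x}\right)\left(1-(1-p_x)^{n-1}\right)\right].$$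 The expected reward of a random agent reporting $y$ (all others trustworthy) is $\alpha r\beta(t_i)(1-p_y)\left(1-(1-p_y)^{n-1}\right)$, and it reports $y$ with probability $p_y$. *)

theory Defs
  imports Complex_Main
begin

text \<open>Ex-ante expected reward of a trustworthy agent (all others trustworthy).
  X: answer space, p: prior, p': posterior p'_x = P(peer = x | own = x),
  r: belief a random peer's TERM score is below own, n: number of tasks,
  alpha: RPTSC scale, b: the decay value beta(t_i).\<close>
definition Ref_bar :: "'x set \<Rightarrow> ('x \<Rightarrow> real) \<Rightarrow> ('x \<Rightarrow> real) \<Rightarrow> real \<Rightarrow> nat \<Rightarrow> real \<Rightarrow> real \<Rightarrow> real" where
  "Ref_bar X p p' r n alpha b =
     alpha * b * (\<Sum>x\<in>X. p x * ((p' x / p x - 1 + r * p' x * (1 - p' x) / p x)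
                                  * (1 - (1 - p x) ^ (n - 1))))"

text \<open>Ex-ante expected reward of random reporting: report y with probability p_y,
  earning alpha r beta(t_i) (1 - p_y)(1 - (1 - p_y)^(n-1)).\<close>
definition E_ra :: "'x set \<Rightarrow> ('x \<Rightarrow> real) \<Rightarrow> real \<Rightarrow> nat \<Rightarrow> real \<Rightarrow> real \<Rightarrow> real" where
  "E_ra X p r n alpha b =
     (\<Sum>y\<in>X. p y * (alpha * r * b * (1 - p y) * (1 - (1 - p y) ^ (n - 1))))"

end

theory Submission
  imports Defs
begin

(* Each report y earns at most alpha b (1 - p y) < alpha b, so random reporting earns
   strictly less than alpha b in expectation; assumption A1 then leaves a strict gap. *)

lemma truncated_reward_less:
  fixes q r c :: real
  assumes "0 < q" "q \<le> 1" "0 \<le> r" "r \<le> 1" "0 < c"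
  shows "c * r * (1 - q) * (1 - (1 - q) ^ m) < c"
proof -
  have "r * (1 - (1 - q) ^ m) \<le> 1"
    using assms by (intro mult_le_one) (simp_all add: power_le_one)
  then have "c * (1 - q) * (r * (1 - (1 - q) ^ m)) \<le> c * (1 - q)"
    using assms by (intro mult_left_le) simp_all
  then have "c * r * (1 - q) * (1 - (1 - q) ^ m) \<le> c * (1 - q)"
    by (simp add: algebra_simps)
  also have "\<dots> < c" using assms by simp
  finally show ?thesis .
qed

lemma E_ra_less:
  assumes "finite X" "(\<Sum>x\<in>X. p x) = 1"
    and "\<And>x. x \<in> X \<Longrightarrow> 0 < p x \<and> p x \<le> 1"
    and "0 \<le> r" "r \<le> 1" "0 < alpha * b"
  shows "E_ra X p r n alpha b < alpha * b"
proof -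
  have "E_ra X p r n alpha b < (\<Sum>y\<in>X. p y * (alpha * b))"
    unfolding E_ra_def
  proof (rule sum_strict_mono)
    show "X \<noteq> {}" using assms(2) by auto
    fix y assume "y \<in> X"
    then show "p y * (alpha * r * b * (1 - p y) * (1 - (1 - p y) ^ (n - 1))) < p y * (alpha * b)"
      using assms truncated_reward_less[of "p y" r "alpha * b" "n - 1"]
      by (simp add: mult.commute mult.left_commute)
  qed (fact assms(1))
  also have "\<dots> = alpha * b" using assms(2) by (simp flip: sum_distrib_right)
  finally show ?thesis .
qed

theorem lemma5:
  fixes X :: "'x set" and p p' :: "'x \<Rightarrow> real" and r alpha cH cL t :: real
    and n :: nat and beta :: "real \<Rightarrow> real"
  assumes finX: "finite X"
    and n2: "n \<ge> 2"
    and p_range: "\<And>x. x \<in> X \<Longrightarrow> 0 < p x \<and> p x < 1"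
    and p_sum: "(\<Sum>x\<in>X. p x) = 1"
    and p'_range: "\<And>x. x \<in> X \<Longrightarrow> 0 < p' x \<and> p' x < 1"
    and r_range: "0 \<le> r" "r \<le> 1"
    and alpha_pos: "alpha > 0"
    and beta_pos: "\<And>s. beta s > 0"
    and beta_dec: "antimono beta"
    and costs: "cL < cH"
    and A1: "Ref_bar X p p' r n alpha (beta t) - alpha * beta t \<ge> cH - cL"
  shows "Ref_bar X p p' r n alpha (beta t) - cH > E_ra X p r n alpha (beta t) - cL"
proof -
  have "E_ra X p r n alpha (beta t) < alpha * beta t"
    using finX p_sum p_range r_range alpha_pos beta_pos[of t]
    by (intro E_ra_less) (auto simp: less_imp_le)
  then show ?thesis using A1 by simp
qed

end
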